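(* Let $G$ be a graph with $n$ vertices. Then for every integer $m\geq 1$, $$P_{DP}(G,m)\leq \frac{m^{n}(m-1)^{|E(G)|}}{m^{|E(G)|}}.$$
   Context: All graphs are finite and simple. A cover of a graph $G$ is a pair $\mathcal{H}=(L,H)$ where $H$ is a graph and $L:V(G)\to\mathcal{P}(V(H))$ satisfies: (1) the sets $L(u)$, $u\in V(G)$, partition $V(H)$; (2) for every $u$, $H[L(u)]$ is complete; (3) if $E_H(L(u),L(v))\neq\emptyset$ then $u=v$ or $uv\in E(G)$; (4) if $uv\in E(G)$ then $E_H(L(u),L(v))$ is a matching (possibly empty). Here $E_H(S,U)$ is the set of edges of $H$ between $S$ and $U$. The cover is $m$-fold if $|L(u)|=m$ for all $u$. An $\mathcal{H}$-coloring is an independent set of $H$ of size $|V(G)|$. $P_{DP}(G,\mathcal{H})$ is the number of $\mathcal{H}$-colorings, and $P_{DP}(G,m)$ is the minimum of $P_{DP}(G,\mathcal{H})$ over all $m$-fold covers $\mathcal{H}$ of $G$. *)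

theory Defs
  imports Complex_Main
begin

definition simple_graph :: "'v set \<Rightarrow> 'v set set \<Rightarrow> bool" where
  "simple_graph V E \<longleftrightarrow> finite V \<and>
     (\<forall>e\<in>E. \<exists>x y. x \<in> V \<and> y \<in> V \<and> x \<noteq> y \<and> e = {x, y})"

definition edges_between :: "'v set set \<Rightarrow> 'v set \<Rightarrow> 'v set \<Rightarrow> 'v set set" where
  "edges_between EH S U = {e \<in> EH. \<exists>x\<in>S. \<exists>y\<in>U. e = {x, y}}"

definition is_matching :: "'v set set \<Rightarrow> bool" where
  "is_matching M \<longleftrightarrow> (\<forall>e\<in>M. \<forall>f\<in>M. e \<noteq> f \<longrightarrow> e \<inter> f = {})"

text \<open>A cover (L, H) of G = (V, E); H = (VH, EH). The vertices of H are taken from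
  the infinite type 'a \<times> nat, so every cover is represented up to isomorphism.\<close>
definition is_cover ::
  "'a set \<Rightarrow> 'a set set \<Rightarrow> ('a \<Rightarrow> ('a \<times> nat) set) \<Rightarrow> ('a \<times> nat) set \<Rightarrow> ('a \<times> nat) set set \<Rightarrow> bool" where
  "is_cover V E L VH EH \<longleftrightarrow>
     simple_graph VH EH \<and>
     (\<Union>u\<in>V. L u) = VH \<and>
     (\<forall>u\<in>V. \<forall>v\<in>V. u \<noteq> v \<longrightarrow> L u \<inter> L v = {}) \<and>
     (\<forall>u\<in>V. \<forall>x\<in>L u. \<forall>y\<in>L u. x \<noteq> y \<longrightarrow> {x, y} \<in> EH) \<and>
     (\<forall>u\<in>V. \<forall>v\<in>V. edges_between EH (L u) (L v) \<noteq> {} \<longrightarrow> u = v \<or> {u, v} \<in> E) \<and>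
     (\<forall>u\<in>V. \<forall>v\<in>V. {u, v} \<in> E \<longrightarrow> is_matching (edges_between EH (L u) (L v)))"

definition is_m_fold_cover ::
  "nat \<Rightarrow> 'a set \<Rightarrow> 'a set set \<Rightarrow> ('a \<Rightarrow> ('a \<times> nat) set) \<Rightarrow> ('a \<times> nat) set \<Rightarrow> ('a \<times> nat) set set \<Rightarrow> bool" where
  "is_m_fold_cover m V E L VH EH \<longleftrightarrow> is_cover V E L VH EH \<and> (\<forall>u\<in>V. card (L u) = m)"

definition independent_set :: "'v set \<Rightarrow> 'v set set \<Rightarrow> 'v set \<Rightarrow> bool" where
  "independent_set VH EH I \<longleftrightarrow> I \<subseteq> VH \<and> (\<forall>x\<in>I. \<forall>y\<in>I. {x, y} \<notin> EH)"

definition DP_colorings :: "'a set \<Rightarrow> ('a \<times> nat) set \<Rightarrow> ('a \<times> nat) set set \<Rightarrow> ('a \<times> nat) set set" where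
  "DP_colorings V VH EH = {I. independent_set VH EH I \<and> card I = card V}"

definition P_DP_cover :: "'a set \<Rightarrow> ('a \<times> nat) set \<Rightarrow> ('a \<times> nat) set set \<Rightarrow> nat" where
  "P_DP_cover V VH EH = card (DP_colorings V VH EH)"

definition P_DP :: "'a set \<Rightarrow> 'a set set \<Rightarrow> nat \<Rightarrow> nat" where
  "P_DP V E m = Inf {P_DP_cover V VH EH | L VH EH. is_m_fold_cover m V E L VH EH}"

end

theory Submission
  imports Defs "HOL-Library.FuncSet" "HOL-Number_Theory.Cong"
begin

text \<open>Take the fibres \<open>{u} \<times> {..<m}\<close> and, for a shift \<open>k e\<close> on every edge \<open>e = xy\<close>, join
  \<open>(x, i)\<close> to \<open>(y, j)\<close> exactly when \<open>i + j \<equiv> k e (mod m)\<close>. This is an \<open>m\<close>-fold cover whose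
  colourings are the maps \<open>c : V \<rightarrow> {..<m}\<close> with \<open>c x + c y \<not>\<equiv> k e\<close> on every edge. Adding the
  edges one at a time and choosing each shift to be the most frequent value of \<open>c x + c y\<close>
  among the maps surviving so far keeps at most a fraction \<open>(m - 1)/m\<close> of them, so some
  choice of shifts leaves at most \<open>m^|V| ((m - 1)/m)^|E|\<close> colourings.\<close>

lemma simple_graph_edge:
  "simple_graph V E \<Longrightarrow> {x, y} \<in> E \<Longrightarrow> x \<in> V \<and> y \<in> V \<and> x \<noteq> y"
  unfolding simple_graph_def by (metis doubleton_eq_iff)

lemma simple_graph_finite_edges:
  assumes "simple_graph V E"
  shows "finite E"
proof -
  have "E \<subseteq> Pow V" "finite V"
    using assms unfolding simple_graph_def by auto
  then show ?thesis
    by (simp add: finite_subset)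
qed

lemma P_DP_le_P_DP_cover:
  assumes "is_m_fold_cover m V E L VH EH"
  shows "P_DP V E m \<le> P_DP_cover V VH EH"
  unfolding P_DP_def using assms by (intro cInf_lower) auto

lemma exists_value_with_small_complement:
  fixes f :: "'b \<Rightarrow> nat"
  assumes fin: "finite S" and m: "m \<ge> 1" and range: "f ` S \<subseteq> {..<m}"
  shows "\<exists>k<m. real (card {c \<in> S. f c \<noteq> k}) \<le> real (card S) * (real m - 1) / real m"
proof (rule ccontr)
  assume contra: "\<not> ?thesis"
  have partition: "S = (\<Union>k<m. {c \<in> S. f c = k})"
    using range by auto
  have "card S = (\<Sum>k<m. card {c \<in> S. f c = k})"
    by (subst partition, rule card_UN_disjoint) (use fin in auto)
  then have total: "real (card S) = (\<Sum>k<m. real (card {c \<in> S. f c = k}))"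
    by simp
  have small: "real (card {c \<in> S. f c = k}) < real (card S) / real m" if "k < m" for k
  proof -
    have "card S = card {c \<in> S. f c = k} + card {c \<in> S. f c \<noteq> k}"
      using fin by (subst card_Un_disjoint[symmetric]) (auto intro: arg_cong[where f = card])
    moreover have "real (card {c \<in> S. f c \<noteq> k}) > real (card S) * (real m - 1) / real m"
      using contra that by auto
    ultimately show ?thesis
      using m by (simp add: field_simps)
  qed
  have "(\<Sum>k<m. real (card {c \<in> S. f c = k})) < (\<Sum>k<m. real (card S) / real m)"
    using m by (intro sum_strict_mono) (auto intro: small simp: lessThan_empty_iff)
  also have "\<dots> = real (card S)"
    using m by simp
  finally show False
    using total by simp
qed

definition avoiding_colorings ::
  "nat \<Rightarrow> 'a set \<Rightarrow> 'a set set \<Rightarrow> ('a set \<Rightarrow> nat) \<Rightarrow> ('a \<Rightarrow> nat) set" where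
  "avoiding_colorings m V F k =
     {c \<in> V \<rightarrow>\<^sub>E {..<m}. \<forall>x y. {x, y} \<in> F \<longrightarrow> x \<noteq> y \<longrightarrow> (c x + c y) mod m \<noteq> k {x, y}}"

lemma avoiding_colorings_insert:
  assumes "a \<noteq> b" and "{a, b} \<notin> F"
  shows "avoiding_colorings m V (insert {a, b} F) (k({a, b} := k0)) =
           {c \<in> avoiding_colorings m V F k. (c a + c b) mod m \<noteq> k0}"
proof -
  have "(k({a, b} := k0)) {x, y} = k {x, y}" if "{x, y} \<in> F" for x y
    using that assms(2) by auto
  then show ?thesis
    using assms unfolding avoiding_colorings_def
    by (auto simp: doubleton_eq_iff add.commute)
qed

lemma exists_shifts_few_avoiding_colorings:
  assumes "finite V" and m: "m \<ge> 1" and "finite F" and "\<forall>e\<in>F. \<exists>x y. x \<noteq> y \<and> e = {x, y}"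
  shows "\<exists>k. real (card (avoiding_colorings m V F k))
               \<le> real m ^ card V * ((real m - 1) / real m) ^ card F"
  using assms(3,4)
proof (induction F rule: finite_induct)
  case empty
  show ?case
    using \<open>finite V\<close> by (simp add: avoiding_colorings_def card_funcsetE)
next
  case (insert e F)
  then obtain k where k: "real (card (avoiding_colorings m V F k))
                            \<le> real m ^ card V * ((real m - 1) / real m) ^ card F"
    by auto
  obtain a b where ab: "a \<noteq> b" "e = {a, b}"
    using insert.prems by blast
  let ?S = "avoiding_colorings m V F k"
  have "finite ?S"
    using \<open>finite V\<close> by (simp add: avoiding_colorings_def finite_PiE)
  moreover have "(\<lambda>c. (c a + c b) mod m) ` ?S \<subseteq> {..<m}"
    using m by auto
  ultimately obtain k0 where k0: "real (card {c \<in> ?S. (c a + c b) mod m \<noteq> k0})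
                                    \<le> real (card ?S) * (real m - 1) / real m"
    using exists_value_with_small_complement[OF _ m] by blast
  have "real (card (avoiding_colorings m V (insert e F) (k(e := k0))))
          \<le> real (card ?S) * ((real m - 1) / real m)"
    using k0 avoiding_colorings_insert[of a b F] insert.hyps(2) ab by simp
  also have "\<dots> \<le> real m ^ card V * ((real m - 1) / real m) ^ card F * ((real m - 1) / real m)"
    using k m by (intro mult_right_mono) auto
  also have "\<dots> = real m ^ card V * ((real m - 1) / real m) ^ card (insert e F)"
    using insert.hyps by simp
  finally show ?case
    by blast
qed

text \<open>Using the symmetric \<open>i + j\<close> avoids having to orient the edges.\<close>

definition cyclic_cover_edges ::
  "nat \<Rightarrow> 'a set \<Rightarrow> 'a set set \<Rightarrow> ('a set \<Rightarrow> nat) \<Rightarrow> ('a \<times> nat) set set" where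
  "cyclic_cover_edges m V E k =
     {{(u, i), (u, j)} | u i j. u \<in> V \<and> i < m \<and> j < m \<and> i \<noteq> j} \<union>
     {{(x, i), (y, j)} | x y i j. {x, y} \<in> E \<and> x \<noteq> y \<and> i < m \<and> j < m \<and> (i + j) mod m = k {x, y}}"

lemma cyclic_cover_edges_between_fibers:
  assumes "e \<in> edges_between (cyclic_cover_edges m V E k) ({u} \<times> {..<m}) ({v} \<times> {..<m})"
    and "u \<noteq> v"
  shows "{u, v} \<in> E \<and> (\<exists>i j. i < m \<and> j < m \<and> (i + j) mod m = k {u, v} \<and> e = {(u, i), (v, j)})"
proof -
  obtain i j where e: "e = {(u, i), (v, j)}" "i < m" "j < m" "e \<in> cyclic_cover_edges m V E k"
    using assms(1) unfolding edges_between_def by auto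
  from e(4) consider (fibre) w i1 j1 where "e = {(w, i1), (w, j1)}"
    | (across) x y i' j' where "e = {(x, i'), (y, j')}" "{x, y} \<in> E" "(i' + j') mod m = k {x, y}"
    unfolding cyclic_cover_edges_def by blast
  then show ?thesis
  proof cases
    case fibre
    then show ?thesis
      using e(1) \<open>u \<noteq> v\<close> by (auto simp: doubleton_eq_iff)
  next
    case across
    then have "(x, i') = (u, i) \<and> (y, j') = (v, j) \<or> (x, i') = (v, j) \<and> (y, j') = (u, i)"
      using e(1) by (auto simp: doubleton_eq_iff)
    then have "{u, v} \<in> E" "(i + j) mod m = k {u, v}"
      using across by (auto simp: insert_commute add.commute)
    then show ?thesis
      using e by blast
  qed
qed

lemma mod_add_left_inj_less:
  fixes i j j' m :: nat
  assumes "j < m" "j' < m" "(i + j) mod m = (i + j') mod m"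
  shows "j = j'"
  using assms by (metis cong_add_lcancel_nat cong_def cong_less_modulus_unique_nat)

lemma cyclic_cover_matching:
  assumes "u \<noteq> v"
  shows "is_matching (edges_between (cyclic_cover_edges m V E k) ({u} \<times> {..<m}) ({v} \<times> {..<m}))"
  unfolding is_matching_def
proof (intro ballI impI)
  fix e f
  assume e_in: "e \<in> edges_between (cyclic_cover_edges m V E k) ({u} \<times> {..<m}) ({v} \<times> {..<m})"
    and f_in: "f \<in> edges_between (cyclic_cover_edges m V E k) ({u} \<times> {..<m}) ({v} \<times> {..<m})"
    and "e \<noteq> f"
  obtain i j where e: "e = {(u, i), (v, j)}" "i < m" "j < m" "(i + j) mod m = k {u, v}"
    using cyclic_cover_edges_between_fibers[OF e_in assms] by blast
  obtain i' j' where f: "f = {(u, i'), (v, j')}" "i' < m" "j' < m" "(i' + j') mod m = k {u, v}"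
    using cyclic_cover_edges_between_fibers[OF f_in assms] by blast
  have "i \<noteq> i'"
  proof
    assume "i = i'"
    then have "j = j'"
      using mod_add_left_inj_less[of j m j' i] e f by simp
    then show False
      using \<open>e \<noteq> f\<close> \<open>i = i'\<close> e f by simp
  qed
  moreover have "j \<noteq> j'"
  proof
    assume "j = j'"
    then have "i = i'"
      using mod_add_left_inj_less[of i m i' j] e f by (simp add: add.commute)
    then show False
      using \<open>e \<noteq> f\<close> \<open>j = j'\<close> e f by simp
  qed
  ultimately show "e \<inter> f = {}"
    using e(1) f(1) assms by auto
qed

lemma cyclic_cover_is_m_fold_cover:
  assumes sg: "simple_graph V E"
  shows "is_m_fold_cover m V E (\<lambda>u. {u} \<times> {..<m}) (V \<times> {..<m}) (cyclic_cover_edges m V E k)"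
proof -
  have "finite V"
    using sg unfolding simple_graph_def by blast
  moreover have "\<exists>p q. p \<in> V \<times> {..<m} \<and> q \<in> V \<times> {..<m} \<and> p \<noteq> q \<and> e = {p, q}"
    if "e \<in> cyclic_cover_edges m V E k" for e
    using that simple_graph_edge[OF sg] unfolding cyclic_cover_edges_def by blast
  ultimately have "simple_graph (V \<times> {..<m}) (cyclic_cover_edges m V E k)"
    unfolding simple_graph_def by blast
  moreover have "u = v \<or> {u, v} \<in> E"
    if "edges_between (cyclic_cover_edges m V E k) ({u} \<times> {..<m}) ({v} \<times> {..<m}) \<noteq> {}" for u v
    using that cyclic_cover_edges_between_fibers by (metis ex_in_conv)
  moreover have "{(u, i), (u, j)} \<in> cyclic_cover_edges m V E k"
    if "u \<in> V" "i < m" "j < m" "i \<noteq> j" for u i j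
    using that unfolding cyclic_cover_edges_def by blast
  ultimately show ?thesis
    unfolding is_m_fold_cover_def is_cover_def
    by (auto simp: cyclic_cover_matching simple_graph_edge[OF sg])
qed

lemma graph_of_function_if_inj_on_fst:
  assumes "finite V" and I: "I \<subseteq> V \<times> A" and inj: "inj_on fst I" and "card I = card V"
  shows "\<exists>c \<in> V \<rightarrow>\<^sub>E A. I = (\<lambda>u. (u, c u)) ` V"
proof -
  have "fst ` I \<subseteq> V" "card (fst ` I) = card V"
    using I card_image[OF inj] \<open>card I = card V\<close> by auto
  then have "fst ` I = V"
    using \<open>finite V\<close> card_subset_eq by blast
  define c where "c = restrict (\<lambda>u. SOME i. (u, i) \<in> I) V"
  have graph: "(u, c u) \<in> I" if u: "u \<in> V" for u
  proof -
    obtain i where "(u, i) \<in> I"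
      using \<open>fst ` I = V\<close> u by force
    then show ?thesis
      unfolding c_def using u by (metis restrict_apply' someI)
  qed
  have "I \<subseteq> (\<lambda>u. (u, c u)) ` V"
  proof
    fix p
    assume "p \<in> I"
    moreover have "fst p \<in> V"
      using \<open>p \<in> I\<close> I by auto
    ultimately have "p = (fst p, c (fst p))"
      using inj_onD[OF inj _ _ graph] by simp
    then show "p \<in> (\<lambda>u. (u, c u)) ` V"
      using \<open>fst p \<in> V\<close> by blast
  qed
  moreover have "c \<in> V \<rightarrow>\<^sub>E A"
    using graph I unfolding c_def by auto
  ultimately show ?thesis
    using graph by blast
qed

lemma cyclic_cover_coloring_is_graph:
  assumes sg: "simple_graph V E" and "I \<in> DP_colorings V (V \<times> {..<m}) (cyclic_cover_edges m V E k)"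
  shows "\<exists>c \<in> avoiding_colorings m V E k. I = (\<lambda>u. (u, c u)) ` V"
proof -
  have I: "I \<subseteq> V \<times> {..<m}" "card I = card V"
    and indep: "\<And>p q. p \<in> I \<Longrightarrow> q \<in> I \<Longrightarrow> {p, q} \<notin> cyclic_cover_edges m V E k"
    using assms(2) unfolding DP_colorings_def independent_set_def by auto
  have inj: "inj_on fst I"
  proof (rule inj_onI)
    fix p q
    assume "p \<in> I" "q \<in> I" "fst p = fst q"
    moreover obtain u i where p: "p = (u, i)"
      by (cases p)
    moreover obtain j where q: "q = (u, j)"
      using \<open>fst p = fst q\<close> p by (cases q) auto
    ultimately have "u \<in> V" "i < m" "j < m"
      using I(1) by auto
    show "p = q"
    proof (rule ccontr)
      assume "p \<noteq> q"
      then have "i \<noteq> j"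
        using p q by simp
      then have "{p, q} \<in> cyclic_cover_edges m V E k"
        using p q \<open>u \<in> V\<close> \<open>i < m\<close> \<open>j < m\<close> unfolding cyclic_cover_edges_def by blast
      then show False
        using indep \<open>p \<in> I\<close> \<open>q \<in> I\<close> by blast
    qed
  qed
  have "finite V"
    using sg simple_graph_def by auto
  then obtain c where c: "c \<in> V \<rightarrow>\<^sub>E {..<m}" and graph: "I = (\<lambda>u. (u, c u)) ` V"
    using graph_of_function_if_inj_on_fst[OF _ I(1) inj I(2)] by blast
  have "(c x + c y) mod m \<noteq> k {x, y}" if "{x, y} \<in> E" "x \<noteq> y" for x y
  proof
    assume "(c x + c y) mod m = k {x, y}"
    moreover have "x \<in> V" "y \<in> V"
      using simple_graph_edge[OF sg that(1)] by auto
    moreover have "c x < m" "c y < m"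
      using c \<open>x \<in> V\<close> \<open>y \<in> V\<close> by auto
    ultimately have "{(x, c x), (y, c y)} \<in> cyclic_cover_edges m V E k"
      using that unfolding cyclic_cover_edges_def by blast
    moreover have "(x, c x) \<in> I" "(y, c y) \<in> I"
      using graph \<open>x \<in> V\<close> \<open>y \<in> V\<close> by auto
    ultimately show False
      using indep by blast
  qed
  then show ?thesis
    using c graph unfolding avoiding_colorings_def by blast
qed

lemma P_DP_cover_cyclic_cover_le:
  assumes sg: "simple_graph V E"
  shows "P_DP_cover V (V \<times> {..<m}) (cyclic_cover_edges m V E k) \<le> card (avoiding_colorings m V E k)"
proof -
  have "DP_colorings V (V \<times> {..<m}) (cyclic_cover_edges m V E k)
          \<subseteq> (\<lambda>c. (\<lambda>u. (u, c u)) ` V) ` avoiding_colorings m V E k"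
    using cyclic_cover_coloring_is_graph[OF sg] by blast
  moreover have "finite (avoiding_colorings m V E k)"
    using sg by (simp add: simple_graph_def avoiding_colorings_def finite_PiE)
  ultimately have "card (DP_colorings V (V \<times> {..<m}) (cyclic_cover_edges m V E k))
                     \<le> card ((\<lambda>c. (\<lambda>u. (u, c u)) ` V) ` avoiding_colorings m V E k)"
    by (intro card_mono) auto
  also have "\<dots> \<le> card (avoiding_colorings m V E k)"
    using \<open>finite (avoiding_colorings m V E k)\<close> by (rule card_image_le)
  finally show ?thesis
    unfolding P_DP_cover_def .
qed

theorem mainTheorem8:
  fixes V :: "'a set" and E :: "'a set set" and m :: nat
  assumes "simple_graph V E" and "m \<ge> 1"
  shows "real (P_DP V E m) \<le>
           real m ^ card V * (real m - 1) ^ card E / real m ^ card E"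
proof -
  have "finite V" "\<forall>e\<in>E. \<exists>x y. x \<noteq> y \<and> e = {x, y}"
    using assms(1) unfolding simple_graph_def by metis+
  then obtain k where k: "real (card (avoiding_colorings m V E k))
                            \<le> real m ^ card V * ((real m - 1) / real m) ^ card E"
    using exists_shifts_few_avoiding_colorings[OF _ assms(2) simple_graph_finite_edges[OF assms(1)]]
    by blast
  have "P_DP V E m \<le> P_DP_cover V (V \<times> {..<m}) (cyclic_cover_edges m V E k)"
    by (rule P_DP_le_P_DP_cover[OF cyclic_cover_is_m_fold_cover[OF assms(1)]])
  also have "\<dots> \<le> card (avoiding_colorings m V E k)"
    using P_DP_cover_cyclic_cover_le[OF assms(1)] .
  finally have "real (P_DP V E m) \<le> real (card (avoiding_colorings m V E k))"
    by simp
  also have "\<dots> \<le> real m ^ card V * ((real m - 1) / real m) ^ card E"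
    by (rule k)
  also have "\<dots> = real m ^ card V * (real m - 1) ^ card E / real m ^ card E"
    by (simp add: power_divide)
  finally show ?thesis .
qed

end
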